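(* Let $V$ be a nonempty set, $E\subset V\times V$, $W\subset V$, $W^c=V\setminus W$. Then $$\Delta_{W^c}\,R_W^-\,(E_W^{-1})^*(E_W)^*\,R_W\,\Delta_{W^c}=\Delta_{W^c}\,A_W\,\Delta_{W^c}.$$
   Context: Relations on $V$: composition $RR'$: $x(RR')y$ iff there is $z$ with $xRz$ and $zR'y$; $R^{-1}$ is the converse; $R^0=\Delta$, $R^{n+1}=RR^n$, $R^+=\bigcup_{k\ge1}R^k$, $R^*=\bigcup_{k\ge0}R^k$. For $S\subset V$, $\Delta_S=\{(x,x):x\in S\}$, $\Delta=\Delta_V$. Definitions: $E_W=\Delta_{W^c}E$; $B_W=E(E_W)^*$; $B_W^-=(B_W)^{-1}=(E_W^{-1})^*E^{-1}$; $K_W=B_W^-\Delta_{W^c}B_W$; $C_W=(\Delta_WK_W\Delta_W)^+\cup\Delta_W$; $A_W=\Delta\cup B_W\cup B_W^-\cup K_W\cup(B_W\cup K_W)\,C_W\,(B_W^-\cup K_W^{-1})$; $R_W=\Delta\cup C_W(B_W^-\cup K_W^{-1})$; $R_W^-=\Delta\cup(B_W\cup K_W)C_W$. *)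

theory Defs
  imports Main
begin

text \<open>Relations on a carrier set V are represented as sets of pairs; composition R R' is
  relcomp (R O R'), Delta_S is Id_on S, and R^* is taken relative to V: Delta_V union R^+.\<close>

definition rstar :: "'a set \<Rightarrow> 'a rel \<Rightarrow> 'a rel" where
  "rstar V R = Id_on V \<union> R\<^sup>+"

definition EW :: "'a set \<Rightarrow> 'a rel \<Rightarrow> 'a set \<Rightarrow> 'a rel" where
  "EW V E W = Id_on (V - W) O E"

definition BW :: "'a set \<Rightarrow> 'a rel \<Rightarrow> 'a set \<Rightarrow> 'a rel" where
  "BW V E W = E O rstar V (EW V E W)"

definition BWm :: "'a set \<Rightarrow> 'a rel \<Rightarrow> 'a set \<Rightarrow> 'a rel" where
  "BWm V E W = converse (BW V E W)"

definition KW :: "'a set \<Rightarrow> 'a rel \<Rightarrow> 'a set \<Rightarrow> 'a rel" where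
  "KW V E W = BWm V E W O Id_on (V - W) O BW V E W"

definition CW :: "'a set \<Rightarrow> 'a rel \<Rightarrow> 'a set \<Rightarrow> 'a rel" where
  "CW V E W = (Id_on W O KW V E W O Id_on W)\<^sup>+ \<union> Id_on W"

definition AW :: "'a set \<Rightarrow> 'a rel \<Rightarrow> 'a set \<Rightarrow> 'a rel" where
  "AW V E W = Id_on V \<union> BW V E W \<union> BWm V E W \<union> KW V E W \<union>
     (BW V E W \<union> KW V E W) O CW V E W O (BWm V E W \<union> converse (KW V E W))"

definition RW :: "'a set \<Rightarrow> 'a rel \<Rightarrow> 'a set \<Rightarrow> 'a rel" where
  "RW V E W = Id_on V \<union> CW V E W O (BWm V E W \<union> converse (KW V E W))"

definition RWm :: "'a set \<Rightarrow> 'a rel \<Rightarrow> 'a set \<Rightarrow> 'a rel" where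
  "RWm V E W = Id_on V \<union> (BW V E W \<union> KW V E W) O CW V E W"

end

theory Submission
  imports Defs
begin

text \<open>Write \<open>F = E\<^sub>W\<close>. Since \<open>\<Delta>\<^bsub>W\<^sup>c\<^esub> B\<^sub>W = F\<^sup>+\<close>, the middle factor
  \<open>(F\<^sup>-\<^sup>1)\<^sup>* F\<^sup>*\<close> equals \<open>\<Delta> \<union> \<Delta>\<^bsub>W\<^sup>c\<^esub> B\<^sub>W \<union> B\<^sub>W\<^sup>- \<Delta>\<^bsub>W\<^sup>c\<^esub> \<union> K\<^sub>W\<close>.
  The identity then only uses that \<open>C\<^sub>W\<close> is a reflexive transitive relation on \<open>W\<close> that
  contains every \<open>K\<^sub>W\<close>-step between points of \<open>W\<close>, and that \<open>K\<^sub>W\<close> is symmetric: a path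
  through the middle factor from \<open>W\<^sup>c\<close> to \<open>W\<^sup>c\<close> either stays at its endpoints or its
  \<open>W\<close>-part merges into one \<open>C\<^sub>W\<close>-segment.\<close>

lemma rstar_converse_O_rstar:
  assumes "R \<subseteq> V \<times> V"
  shows "rstar V (converse R) O rstar V R
    = Id_on V \<union> R\<^sup>+ \<union> (converse R)\<^sup>+ \<union> (converse R)\<^sup>+ O R\<^sup>+"
proof -
  have "R\<^sup>+ \<subseteq> V \<times> V"
    using assms by (rule trancl_subset_Sigma)
  then show ?thesis
    unfolding rstar_def trancl_converse by blast
qed

lemma Id_on_compl_O_BW:
  assumes "E \<subseteq> V \<times> V"
  shows "Id_on (V - W) O BW V E W = (EW V E W)\<^sup>+"
proof -
  have "Id_on (V - W) O BW V E W = EW V E W O rstar V (EW V E W)"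
    unfolding BW_def EW_def by (simp only: O_assoc)
  also have "\<dots> = EW V E W O (EW V E W)\<^sup>*"
    using assms unfolding rstar_def EW_def rtrancl_trancl_reflcl by blast
  finally show ?thesis
    by (simp only: trancl_unfold_left)
qed

lemma BWm_O_Id_on_compl:
  assumes "E \<subseteq> V \<times> V"
  shows "BWm V E W O Id_on (V - W) = (converse (EW V E W))\<^sup>+"
  using arg_cong[OF Id_on_compl_O_BW[OF assms, of W], of converse]
  unfolding BWm_def converse_relcomp converse_Id_on trancl_converse .

lemma KW_eq_trancl:
  assumes "E \<subseteq> V \<times> V"
  shows "KW V E W = (converse (EW V E W))\<^sup>+ O (EW V E W)\<^sup>+"
proof -
  have "KW V E W = (BWm V E W O Id_on (V - W)) O (Id_on (V - W) O BW V E W)"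
    unfolding KW_def by auto
  then show ?thesis
    by (simp only: Id_on_compl_O_BW[OF assms] BWm_O_Id_on_compl[OF assms])
qed

lemma rstar_converse_EW_O_rstar_EW:
  assumes "E \<subseteq> V \<times> V"
  shows "rstar V (converse (EW V E W)) O rstar V (EW V E W)
    = Id_on V \<union> Id_on (V - W) O BW V E W \<union> BWm V E W O Id_on (V - W) \<union> KW V E W"
proof -
  have "EW V E W \<subseteq> V \<times> V"
    using assms unfolding EW_def by blast
  then show ?thesis
    unfolding Id_on_compl_O_BW[OF assms] BWm_O_Id_on_compl[OF assms]
      KW_eq_trancl[OF assms] by (rule rstar_converse_O_rstar)
qed

lemma CW_subset: "CW V E W \<subseteq> W \<times> W"
proof -
  have "Id_on W O KW V E W O Id_on W \<subseteq> W \<times> W"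
    by blast
  then show ?thesis
    unfolding CW_def using trancl_subset_Sigma by blast
qed

lemma Id_on_subset_CW: "Id_on W \<subseteq> CW V E W"
  unfolding CW_def by blast

lemma Id_on_O_KW_O_Id_on_subset_CW: "Id_on W O KW V E W O Id_on W \<subseteq> CW V E W"
  unfolding CW_def by blast

lemma trans_CW: "trans (CW V E W)"
  unfolding CW_def trans_def by (blast intro: trancl_trans)

lemma sym_KW: "sym (KW V E W)"
  unfolding KW_def BWm_def sym_def by blast

lemma Id_on_compl_product_subset:
  fixes B K C :: "'a rel"
  assumes C_on: "C \<subseteq> W \<times> W" and C_refl: "Id_on W \<subseteq> C" and "trans C"
    and K_in_C: "Id_on W O K O Id_on W \<subseteq> C" and "sym K"
  shows "Id_on (V - W) O (Id_on V \<union> (B \<union> K) O C) O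
      (Id_on V \<union> Id_on (V - W) O B \<union> converse B O Id_on (V - W) \<union> K) O
      (Id_on V \<union> C O (converse B \<union> converse K)) O Id_on (V - W)
    \<subseteq> Id_on (V - W) O (Id_on V \<union> B \<union> converse B \<union> K \<union> (B \<union> K) O C O (converse B \<union> converse K))
      O Id_on (V - W)"
    (is "Id_on ?D O ?X O ?S O ?Y O Id_on ?D \<subseteq> Id_on ?D O ?A O Id_on ?D")
proof (rule subrelI)
  have S_in_C: "(a, b) \<in> C" if "(a, b) \<in> ?S" "a \<in> W" "b \<in> W" for a b
    using that K_in_C C_refl by blast
  have S_enter: "(x, b) \<in> B \<union> K" if "(x, b) \<in> ?S" "x \<notin> W" "b \<in> W" for x b
    using that by blast
  have S_leave: "(a, y) \<in> converse B \<union> converse K" if "(a, y) \<in> ?S" "a \<in> W" "y \<notin> W" for a y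
    using that \<open>sym K\<close> by (blast dest: symD)
  have "C O C \<subseteq> C"
    using \<open>trans C\<close> by (rule trans_O_subset)
  fix x y
  assume "(x, y) \<in> Id_on ?D O ?X O ?S O ?Y O Id_on ?D"
  then obtain a b where x: "x \<in> ?D" and y: "y \<in> ?D"
    and x_a: "(x, a) \<in> ?X" and a_b: "(a, b) \<in> ?S" and b_y: "(b, y) \<in> ?Y"
    by blast
  have a_out: "a = x" if "a \<notin> W"
    using x_a C_on that by blast
  have a_in: "(x, a) \<in> (B \<union> K) O C" if "a \<in> W"
    using x_a x that by blast
  have b_out: "b = y" if "b \<notin> W"
    using b_y C_on that by blast
  have b_in: "(b, y) \<in> C O (converse B \<union> converse K)" if "b \<in> W"
    using b_y y that by blast
  have "(x, y) \<in> ?A"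
  proof (cases "a \<in> W"; cases "b \<in> W")
    assume "a \<in> W" "b \<in> W"
    then have "(x, y) \<in> (B \<union> K) O (C O C O C) O (converse B \<union> converse K)"
      using a_in S_in_C[OF a_b] b_in by blast
    then show ?thesis
      using \<open>C O C \<subseteq> C\<close> by blast
  next
    assume "a \<in> W" "b \<notin> W"
    then show ?thesis
      using a_in S_leave b_out a_b y by blast
  next
    assume "a \<notin> W" "b \<in> W"
    then show ?thesis
      using a_out S_enter b_in a_b x by blast
  next
    assume "a \<notin> W" "b \<notin> W"
    then show ?thesis
      using a_out b_out a_b x y by blast
  qed
  then show "(x, y) \<in> Id_on ?D O ?A O Id_on ?D"
    using x y by blast
qed

lemma Id_on_compl_product_collapse:
  fixes B K C :: "'a rel"
  assumes "W \<subseteq> V" and "C \<subseteq> W \<times> W" and "Id_on W \<subseteq> C" and "trans C"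
    and "Id_on W O K O Id_on W \<subseteq> C" and "sym K"
  shows "Id_on (V - W) O (Id_on V \<union> (B \<union> K) O C) O
      (Id_on V \<union> Id_on (V - W) O B \<union> converse B O Id_on (V - W) \<union> K) O
      (Id_on V \<union> C O (converse B \<union> converse K)) O Id_on (V - W)
    = Id_on (V - W) O (Id_on V \<union> B \<union> converse B \<union> K \<union> (B \<union> K) O C O (converse B \<union> converse K))
      O Id_on (V - W)"
proof (rule subset_antisym)
  show "Id_on (V - W) O (Id_on V \<union> B \<union> converse B \<union> K \<union> (B \<union> K) O C O (converse B \<union> converse K))
      O Id_on (V - W)
    \<subseteq> Id_on (V - W) O (Id_on V \<union> (B \<union> K) O C) O
      (Id_on V \<union> Id_on (V - W) O B \<union> converse B O Id_on (V - W) \<union> K) O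
      (Id_on V \<union> C O (converse B \<union> converse K)) O Id_on (V - W)"
    using assms(1-3) by blast
qed (rule Id_on_compl_product_subset[OF assms(2-6)])

theorem lemma5:
  fixes V W :: "'a set" and E :: "'a rel"
  assumes "V \<noteq> {}" and "E \<subseteq> V \<times> V" and "W \<subseteq> V"
  shows "Id_on (V - W) O RWm V E W O rstar V (converse (EW V E W)) O rstar V (EW V E W)
           O RW V E W O Id_on (V - W)
         = Id_on (V - W) O AW V E W O Id_on (V - W)"
proof -
  have "Id_on (V - W) O RWm V E W O rstar V (converse (EW V E W)) O rstar V (EW V E W)
           O RW V E W O Id_on (V - W)
      = Id_on (V - W) O RWm V E W O (rstar V (converse (EW V E W)) O rstar V (EW V E W))
           O RW V E W O Id_on (V - W)"
    by (simp only: O_assoc)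
  also have "\<dots> = Id_on (V - W) O AW V E W O Id_on (V - W)"
    unfolding rstar_converse_EW_O_rstar_EW[OF assms(2)] RWm_def RW_def AW_def BWm_def
    by (rule Id_on_compl_product_collapse[OF assms(3) CW_subset Id_on_subset_CW trans_CW
          Id_on_O_KW_O_Id_on_subset_CW sym_KW])
  finally show ?thesis .
qed

end
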